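(* Let $\Omega$ be a compact Hausdorff space such that $C(\Omega)$ admits an equivalent URED norm. Let $E\subset\Omega$ be closed and $J=\{f\in C(\Omega): f|_E=0\}$, with quotient map $\pi:C(\Omega)\to C(\Omega)/J$. Suppose that for every Banach lattice $X$ and every bounded linear lattice homomorphism $T:X\to C(\Omega)/J$ there is a linear lattice homomorphism $T':X\to C(\Omega)$ with $\pi\circ T'=T$ and $\|T'\|=\|T\|$. Then $C(\Omega)/J$ admits an equivalent URED norm.
   Context: $C(\Omega)$ is the Banach lattice of real-valued continuous functions on $\Omega$ with the supremum norm and pointwise order; $C(\Omega)/J$ is identified (isometrically and as a Banach lattice) with $C(E)$ via $\pi(f)\mapsto f|_E$. A norm on a Banach space $Y$ is uniformly rotund in every direction (URED) if whenever $(x_n),(y_n)$ are sequences of unit vectors with $\lim_n\|\tfrac{x_n+y_n}{2}\|=1$ and there exist $z\in Y$ and scalars $r_n$ with $x_n-y_n=r_nz$ for all $n$, then $\lim_n\|x_n-y_n\|=0$. *)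

theory Defs
  imports "HOL-Analysis.Analysis"
begin

text \<open>C(Omega) for Omega the whole (compact Hausdorff) type 'a.\<close>
definition Cfun :: "('a::topological_space \<Rightarrow> real) set" where
  "Cfun = {f. continuous_on UNIV f}"

text \<open>C(E), realised as continuous functions on E extended by 0 outside E.
  This is C(Omega)/J via pi(f) = f restricted to E.\<close>
definition CfunOn :: "'a::topological_space set \<Rightarrow> ('a \<Rightarrow> real) set" where
  "CfunOn E = {g. continuous_on E g \<and> (\<forall>t. t \<notin> E \<longrightarrow> g t = 0)}"

definition supn :: "'a set \<Rightarrow> ('a \<Rightarrow> real) \<Rightarrow> real" where
  "supn S f = (if S = {} then 0 else (SUP t\<in>S. \<bar>f t\<bar>))"

definition is_norm_on :: "('a \<Rightarrow> real) set \<Rightarrow> (('a \<Rightarrow> real) \<Rightarrow> real) \<Rightarrow> bool" where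
  "is_norm_on V N \<longleftrightarrow>
     (\<forall>x\<in>V. N x \<ge> 0 \<and> (N x = 0 \<longleftrightarrow> x = (\<lambda>t. 0))) \<and>
     (\<forall>x\<in>V. \<forall>a. N (\<lambda>t. a * x t) = \<bar>a\<bar> * N x) \<and>
     (\<forall>x\<in>V. \<forall>y\<in>V. N (\<lambda>t. x t + y t) \<le> N x + N y)"

definition equiv_norms_on :: "('a \<Rightarrow> real) set \<Rightarrow> (('a \<Rightarrow> real) \<Rightarrow> real) \<Rightarrow> (('a \<Rightarrow> real) \<Rightarrow> real) \<Rightarrow> bool" where
  "equiv_norms_on V N M \<longleftrightarrow> (\<exists>c C. 0 < c \<and> 0 < C \<and> (\<forall>x\<in>V. c * M x \<le> N x \<and> N x \<le> C * M x))"

definition URED_on :: "('a \<Rightarrow> real) set \<Rightarrow> (('a \<Rightarrow> real) \<Rightarrow> real) \<Rightarrow> bool" where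
  "URED_on V N \<longleftrightarrow>
     (\<forall>(xs :: nat \<Rightarrow> 'a \<Rightarrow> real) ys z (r :: nat \<Rightarrow> real).
        (\<forall>n. xs n \<in> V \<and> ys n \<in> V \<and> N (xs n) = 1 \<and> N (ys n) = 1) \<and>
        z \<in> V \<and> (\<forall>n. (\<lambda>t. xs n t - ys n t) = (\<lambda>t. r n * z t)) \<and>
        ((\<lambda>n. N (\<lambda>t. (xs n t + ys n t) / 2)) \<longlonglongrightarrow> 1)
        \<longrightarrow> ((\<lambda>n. N (\<lambda>t. xs n t - ys n t)) \<longlonglongrightarrow> 0))"

definition admits_equiv_URED :: "('a \<Rightarrow> real) set \<Rightarrow> (('a \<Rightarrow> real) \<Rightarrow> real) \<Rightarrow> bool" where
  "admits_equiv_URED V M \<longleftrightarrow> (\<exists>N. is_norm_on V N \<and> equiv_norms_on V N M \<and> URED_on V N)"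

record 'v blat =
  carr :: "'v set"
  add  :: "'v \<Rightarrow> 'v \<Rightarrow> 'v"
  scal :: "real \<Rightarrow> 'v \<Rightarrow> 'v"
  zer  :: "'v"
  nrm  :: "'v \<Rightarrow> real"
  leq  :: "'v \<Rightarrow> 'v \<Rightarrow> bool"
  join :: "'v \<Rightarrow> 'v \<Rightarrow> 'v"

definition babs :: "'v blat \<Rightarrow> 'v \<Rightarrow> 'v" where
  "babs L x = join L x (scal L (-1) x)"

definition banach_lattice :: "'v blat \<Rightarrow> bool" where
  "banach_lattice L \<longleftrightarrow>
   \<comment> \<open>real vector space\<close>
   zer L \<in> carr L \<and>
   (\<forall>x\<in>carr L. \<forall>y\<in>carr L. add L x y \<in> carr L \<and> join L x y \<in> carr L) \<and>
   (\<forall>a. \<forall>x\<in>carr L. scal L a x \<in> carr L) \<and>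
   (\<forall>x\<in>carr L. \<forall>y\<in>carr L. \<forall>z\<in>carr L. add L (add L x y) z = add L x (add L y z)) \<and>
   (\<forall>x\<in>carr L. \<forall>y\<in>carr L. add L x y = add L y x) \<and>
   (\<forall>x\<in>carr L. add L x (zer L) = x) \<and>
   (\<forall>x\<in>carr L. add L x (scal L (-1) x) = zer L) \<and>
   (\<forall>a. \<forall>x\<in>carr L. \<forall>y\<in>carr L. scal L a (add L x y) = add L (scal L a x) (scal L a y)) \<and>
   (\<forall>a b. \<forall>x\<in>carr L. scal L (a + b) x = add L (scal L a x) (scal L b x)) \<and>
   (\<forall>a b. \<forall>x\<in>carr L. scal L a (scal L b x) = scal L (a * b) x) \<and>
   (\<forall>x\<in>carr L. scal L 1 x = x) \<and>
   \<comment> \<open>norm\<close>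
   (\<forall>x\<in>carr L. nrm L x \<ge> 0 \<and> (nrm L x = 0 \<longleftrightarrow> x = zer L)) \<and>
   (\<forall>a. \<forall>x\<in>carr L. nrm L (scal L a x) = \<bar>a\<bar> * nrm L x) \<and>
   (\<forall>x\<in>carr L. \<forall>y\<in>carr L. nrm L (add L x y) \<le> nrm L x + nrm L y) \<and>
   \<comment> \<open>completeness\<close>
   (\<forall>s. (\<forall>n. s n \<in> carr L) \<and>
        (\<forall>e>0. \<exists>K. \<forall>m\<ge>K. \<forall>n\<ge>K. nrm L (add L (s m) (scal L (-1) (s n))) < e)
        \<longrightarrow> (\<exists>l\<in>carr L. (\<lambda>n. nrm L (add L (s n) (scal L (-1) l))) \<longlonglongrightarrow> 0)) \<and>
   \<comment> \<open>partial order compatible with the linear structure\<close>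
   (\<forall>x\<in>carr L. leq L x x) \<and>
   (\<forall>x\<in>carr L. \<forall>y\<in>carr L. leq L x y \<and> leq L y x \<longrightarrow> x = y) \<and>
   (\<forall>x\<in>carr L. \<forall>y\<in>carr L. \<forall>z\<in>carr L. leq L x y \<and> leq L y z \<longrightarrow> leq L x z) \<and>
   (\<forall>x\<in>carr L. \<forall>y\<in>carr L. \<forall>z\<in>carr L. leq L x y \<longrightarrow> leq L (add L x z) (add L y z)) \<and>
   (\<forall>a. \<forall>x\<in>carr L. \<forall>y\<in>carr L. 0 \<le> a \<and> leq L x y \<longrightarrow> leq L (scal L a x) (scal L a y)) \<and>
   \<comment> \<open>lattice: join is the least upper bound\<close>
   (\<forall>x\<in>carr L. \<forall>y\<in>carr L. leq L x (join L x y) \<and> leq L y (join L x y)) \<and>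
   (\<forall>x\<in>carr L. \<forall>y\<in>carr L. \<forall>z\<in>carr L. leq L x z \<and> leq L y z \<longrightarrow> leq L (join L x y) z) \<and>
   \<comment> \<open>lattice norm\<close>
   (\<forall>x\<in>carr L. \<forall>y\<in>carr L. leq L (babs L x) (babs L y) \<longrightarrow> nrm L x \<le> nrm L y)"

definition lin_lattice_hom :: "'v blat \<Rightarrow> ('a \<Rightarrow> real) set \<Rightarrow> ('v \<Rightarrow> 'a \<Rightarrow> real) \<Rightarrow> bool" where
  "lin_lattice_hom L V T \<longleftrightarrow>
     (\<forall>x\<in>carr L. T x \<in> V) \<and>
     (\<forall>x\<in>carr L. \<forall>y\<in>carr L. T (add L x y) = (\<lambda>t. T x t + T y t)) \<and>
     (\<forall>a. \<forall>x\<in>carr L. T (scal L a x) = (\<lambda>t. a * T x t)) \<and>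
     (\<forall>x\<in>carr L. \<forall>y\<in>carr L. T (join L x y) = (\<lambda>t. max (T x t) (T y t)))"

definition bounded_op :: "'v blat \<Rightarrow> 'a set \<Rightarrow> ('v \<Rightarrow> 'a \<Rightarrow> real) \<Rightarrow> bool" where
  "bounded_op L S T \<longleftrightarrow> (\<exists>K. \<forall>x\<in>carr L. supn S (T x) \<le> K * nrm L x)"

definition opnorm :: "'v blat \<Rightarrow> 'a set \<Rightarrow> ('v \<Rightarrow> 'a \<Rightarrow> real) \<Rightarrow> real" where
  "opnorm L S T = Sup {supn S (T x) | x. x \<in> carr L \<and> nrm L x \<le> 1}"

end

theory Submission
  imports Defs
begin

text \<open>Applying the lifting hypothesis to the identity of \<open>C(E)\<close>, viewed as a Banach lattice,
  yields a bounded linear extension operator \<open>S : C(E) \<rightarrow> C(\<Omega>)\<close>. Since \<open>S g\<close> restricts to \<open>g\<close>,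
  \<open>S\<close> is an isomorphic embedding, and the pullback \<open>g \<mapsto> N (S g)\<close> of an equivalent URED norm
  \<open>N\<close> on \<open>C(\<Omega>)\<close> is an equivalent URED norm on \<open>C(E)\<close>: the URED condition only involves
  differences along a fixed direction, which a linear map preserves.\<close>

lemma bdd_above_abs_image:
  fixes g :: "'a::topological_space \<Rightarrow> real"
  assumes "compact S" "continuous_on S g"
  shows "bdd_above ((\<lambda>t. \<bar>g t\<bar>) ` S)"
proof -
  have "compact ((\<lambda>t. \<bar>g t\<bar>) ` S)"
    using assms by (auto intro!: compact_continuous_image continuous_intros)
  then show ?thesis by (intro bounded_imp_bdd_above compact_imp_bounded)
qed

lemma supn_upper:
  assumes "compact S" "continuous_on S g" "t \<in> S"
  shows "\<bar>g t\<bar> \<le> supn S g"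
  using assms bdd_above_abs_image[OF assms(1,2)] unfolding supn_def
  by (auto intro: cSUP_upper)

lemma supn_least:
  assumes "0 \<le> B" "\<And>t. t \<in> S \<Longrightarrow> \<bar>g t\<bar> \<le> B"
  shows "supn S g \<le> B"
  using assms unfolding supn_def by (auto intro: cSUP_least)

lemma supn_nonneg:
  assumes "compact S" "continuous_on S g"
  shows "0 \<le> supn S g"
proof (cases "S = {}")
  case False
  then obtain t where "t \<in> S" by blast
  then show ?thesis using supn_upper[OF assms \<open>t \<in> S\<close>] by linarith
qed (simp add: supn_def)

lemma supn_zero: "supn S (\<lambda>t. 0) = 0"
  by (rule antisym[OF supn_least]) (auto simp: supn_def)

lemma supn_eq_0_imp:
  assumes "compact S" "continuous_on S g" "supn S g = 0" "t \<in> S"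
  shows "g t = 0"
  using supn_upper[OF assms(1,2,4)] assms(3) by simp

lemma supn_scale:
  assumes "compact S" "continuous_on S g"
  shows "supn S (\<lambda>t. a * g t) = \<bar>a\<bar> * supn S g"
proof (rule antisym)
  have c: "continuous_on S (\<lambda>t. a * g t)" using assms(2) by (intro continuous_intros)
  show "supn S (\<lambda>t. a * g t) \<le> \<bar>a\<bar> * supn S g"
    using supn_upper[OF assms] supn_nonneg[OF assms]
    by (intro supn_least) (auto simp: abs_mult intro: mult_left_mono)
  show "\<bar>a\<bar> * supn S g \<le> supn S (\<lambda>t. a * g t)"
  proof (cases "a = 0")
    case True
    then show ?thesis using supn_nonneg[OF assms(1) c] by simp
  next
    case False
    have "supn S g \<le> supn S (\<lambda>t. a * g t) / \<bar>a\<bar>"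
    proof (rule supn_least)
      show "0 \<le> supn S (\<lambda>t. a * g t) / \<bar>a\<bar>" using supn_nonneg[OF assms(1) c] by simp
      fix t assume "t \<in> S"
      then have "\<bar>a\<bar> * \<bar>g t\<bar> \<le> supn S (\<lambda>t. a * g t)"
        using supn_upper[OF assms(1) c] by (simp add: abs_mult)
      then show "\<bar>g t\<bar> \<le> supn S (\<lambda>t. a * g t) / \<bar>a\<bar>"
        using False by (simp add: field_simps)
    qed
    then show ?thesis using False by (simp add: field_simps)
  qed
qed

lemma supn_triangle:
  assumes "compact S" "continuous_on S g" "continuous_on S h"
  shows "supn S (\<lambda>t. g t + h t) \<le> supn S g + supn S h"
proof (rule supn_least)
  show "0 \<le> supn S g + supn S h" using supn_nonneg assms by (metis add_nonneg_nonneg)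
  fix t assume "t \<in> S"
  then show "\<bar>g t + h t\<bar> \<le> supn S g + supn S h"
    using supn_upper[OF assms(1,2)] supn_upper[OF assms(1,3)] abs_triangle_ineq
    by (smt (verit, best))
qed

lemma supn_mono:
  assumes "compact S" "continuous_on S h" "\<And>t. t \<in> S \<Longrightarrow> \<bar>g t\<bar> \<le> \<bar>h t\<bar>"
  shows "supn S g \<le> supn S h"
  using supn_upper[OF assms(1,2)] supn_nonneg[OF assms(1,2)] assms(3)
  by (intro supn_least) (auto intro: order_trans)

lemma supn_le_supn_extension:
  assumes "compact U" "E \<subseteq> U" "continuous_on U f" "\<And>t. t \<in> E \<Longrightarrow> f t = g t"
  shows "supn E g \<le> supn U f"
  using assms supn_upper[OF assms(1,3)] supn_nonneg[OF assms(1,3)]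
  by (intro supn_least) (metis subsetD)+

subsection \<open>The Banach lattice \<open>C(E)\<close>\<close>

lemma CfunOn_cont: "g \<in> CfunOn E \<Longrightarrow> continuous_on E g"
  unfolding CfunOn_def by auto

lemma CfunOn_outside: "g \<in> CfunOn E \<Longrightarrow> t \<notin> E \<Longrightarrow> g t = 0"
  unfolding CfunOn_def by auto

lemma CfunOn_zero: "(\<lambda>t. 0) \<in> CfunOn E"
  unfolding CfunOn_def by auto

lemma CfunOn_add: "g \<in> CfunOn E \<Longrightarrow> h \<in> CfunOn E \<Longrightarrow> (\<lambda>t. g t + h t) \<in> CfunOn E"
  unfolding CfunOn_def by (auto intro!: continuous_intros)

lemma CfunOn_scale: "g \<in> CfunOn E \<Longrightarrow> (\<lambda>t. a * g t) \<in> CfunOn E"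
  unfolding CfunOn_def by (auto intro!: continuous_intros)

lemma CfunOn_max: "g \<in> CfunOn E \<Longrightarrow> h \<in> CfunOn E \<Longrightarrow> (\<lambda>t. max (g t) (h t)) \<in> CfunOn E"
  unfolding CfunOn_def by (auto intro!: continuous_intros)

lemma CfunOn_eq_0_iff_supn:
  assumes "compact E" "g \<in> CfunOn E"
  shows "supn E g = 0 \<longleftrightarrow> g = (\<lambda>t. 0)"
  using supn_eq_0_imp[OF assms(1) CfunOn_cont[OF assms(2)]] CfunOn_outside[OF assms(2)]
  by (auto simp: supn_zero)

lemma CfunOn_complete:
  assumes E: "compact E" and g: "\<And>n. g n \<in> CfunOn E"
    and Cauchy: "\<forall>e>0. \<exists>K. \<forall>m\<ge>K. \<forall>n\<ge>K. supn E (\<lambda>t. g m t + -1 * g n t) < e"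
  shows "\<exists>l\<in>CfunOn E. (\<lambda>n. supn E (\<lambda>t. g n t + -1 * l t)) \<longlonglongrightarrow> 0"
proof -
  have cont: "\<And>n. continuous_on E (g n)" using g CfunOn_cont by blast
  have "uniformly_Cauchy_on E g"
    unfolding uniformly_Cauchy_on_def
  proof (intro allI impI)
    fix e :: real assume "e > 0"
    then obtain K where K: "\<forall>m\<ge>K. \<forall>n\<ge>K. supn E (\<lambda>t. g m t + -1 * g n t) < e"
      using Cauchy by blast
    show "\<exists>M. \<forall>x\<in>E. \<forall>m\<ge>M. \<forall>n\<ge>M. dist (g m x) (g n x) < e"
    proof (intro exI ballI allI impI)
      fix x m n assume "x \<in> E" "K \<le> m" "K \<le> n"
      have "continuous_on E (\<lambda>t. g m t + -1 * g n t)" using cont by (intro continuous_intros)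
      from supn_upper[OF E this \<open>x \<in> E\<close>] K \<open>K \<le> m\<close> \<open>K \<le> n\<close>
      show "dist (g m x) (g n x) < e" unfolding dist_real_def by fastforce
    qed
  qed
  then obtain l0 where "uniform_limit E g l0 sequentially"
    using Cauchy_uniformly_convergent uniformly_convergent_on_def by blast
  define l where "l t = (if t \<in> E then l0 t else 0)" for t
  have lim: "uniform_limit E g l sequentially"
    using \<open>uniform_limit E g l0 sequentially\<close> unfolding uniform_limit_iff l_def
    by (auto elim!: eventually_mono)
  have l_cont: "continuous_on E l"
    by (rule uniform_limit_theorem[OF _ lim]) (auto simp: cont)
  then have "l \<in> CfunOn E" unfolding CfunOn_def l_def by auto
  moreover have "(\<lambda>n. supn E (\<lambda>t. g n t + -1 * l t)) \<longlonglongrightarrow> 0"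
  proof (rule LIMSEQ_I)
    fix r :: real assume "r > 0"
    then have "\<forall>\<^sub>F n in sequentially. \<forall>x\<in>E. dist (g n x) (l x) < r/2"
      using lim unfolding uniform_limit_iff by (meson half_gt_zero)
    then obtain M where M: "\<And>n. n \<ge> M \<Longrightarrow> \<forall>x\<in>E. dist (g n x) (l x) < r/2"
      unfolding eventually_sequentially by blast
    show "\<exists>M. \<forall>n\<ge>M. norm (supn E (\<lambda>t. g n t + -1 * l t) - 0) < r"
    proof (intro exI allI impI)
      fix n assume "M \<le> n"
      have "continuous_on E (\<lambda>t. g n t + -1 * l t)"
        using cont l_cont by (intro continuous_intros)
      moreover have "supn E (\<lambda>t. g n t + -1 * l t) \<le> r/2"
        using M[OF \<open>M \<le> n\<close>] \<open>r > 0\<close> by (intro supn_least) (auto simp: dist_real_def)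
      ultimately show "norm (supn E (\<lambda>t. g n t + -1 * l t) - 0) < r"
        using supn_nonneg[OF E] \<open>r > 0\<close> by fastforce
    qed
  qed
  ultimately show ?thesis by blast
qed

text \<open>The lifting hypothesis only speaks about Banach lattices whose carrier has type
  \<open>('a \<Rightarrow> real) set\<close>, so \<open>C(E)\<close> is represented by the singletons \<open>{g}\<close>; \<open>the_elem\<close> is then
  the identity of \<open>C(E)\<close>.\<close>

definition CfunOn_blat :: "'a::topological_space set \<Rightarrow> ('a \<Rightarrow> real) set blat" where
  "CfunOn_blat E = \<lparr>carr = (\<lambda>g. {g}) ` CfunOn E,
     add = (\<lambda>X Y. {\<lambda>t. the_elem X t + the_elem Y t}),
     scal = (\<lambda>a X. {\<lambda>t. a * the_elem X t}),
     zer = {\<lambda>t. 0},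
     nrm = (\<lambda>X. supn E (the_elem X)),
     leq = (\<lambda>X Y. \<forall>t. the_elem X t \<le> the_elem Y t),
     join = (\<lambda>X Y. {\<lambda>t. max (the_elem X t) (the_elem Y t)})\<rparr>"

lemma CfunOn_blat_complete:
  assumes E: "compact E" and s: "\<forall>n. s n \<in> carr (CfunOn_blat E)"
    and Cauchy: "\<forall>e>0. \<exists>K. \<forall>m\<ge>K. \<forall>n\<ge>K.
      nrm (CfunOn_blat E) (add (CfunOn_blat E) (s m) (scal (CfunOn_blat E) (- 1) (s n))) < e"
  shows "\<exists>l\<in>carr (CfunOn_blat E).
    (\<lambda>n. nrm (CfunOn_blat E) (add (CfunOn_blat E) (s n) (scal (CfunOn_blat E) (- 1) l))) \<longlonglongrightarrow> 0"
proof -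
  have s_CfunOn: "the_elem (s n) \<in> CfunOn E" for n
  proof -
    obtain g where "g \<in> CfunOn E" "s n = {g}" using s by (auto simp: CfunOn_blat_def)
    then show ?thesis by simp
  qed
  obtain l where "l \<in> CfunOn E" "(\<lambda>n. supn E (\<lambda>t. the_elem (s n) t + -1 * l t)) \<longlonglongrightarrow> 0"
    using CfunOn_complete[OF E, of "\<lambda>n. the_elem (s n)"] s_CfunOn Cauchy
    by (auto simp: CfunOn_blat_def)
  then show ?thesis
    by (intro bexI[of _ "{l}"]) (auto simp: CfunOn_blat_def)
qed

lemma CfunOn_blat_lattice_norm:
  assumes E: "compact E" and "x \<in> carr (CfunOn_blat E)" "y \<in> carr (CfunOn_blat E)"
    and "leq (CfunOn_blat E) (babs (CfunOn_blat E) x) (babs (CfunOn_blat E) y)"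
  shows "nrm (CfunOn_blat E) x \<le> nrm (CfunOn_blat E) y"
proof -
  obtain g h where "x = {g}" "y = {h}" "h \<in> CfunOn E"
    using assms(2,3) by (auto simp: CfunOn_blat_def)
  moreover have "\<bar>the_elem x t\<bar> \<le> \<bar>the_elem y t\<bar>" for t
    using assms(4) unfolding babs_def CfunOn_blat_def
    by (auto simp: abs_if max_def split: if_splits elim!: allE[of _ t])
  ultimately show ?thesis
    using supn_mono[OF E CfunOn_cont] by (simp add: CfunOn_blat_def)
qed

lemma banach_lattice_CfunOn_blat:
  assumes E: "compact E"
  shows "banach_lattice (CfunOn_blat E)"
  unfolding banach_lattice_def
proof (intro conjI)
  show "\<forall>x\<in>carr (CfunOn_blat E). 0 \<le> nrm (CfunOn_blat E) x \<and>
          (nrm (CfunOn_blat E) x = 0) = (x = zer (CfunOn_blat E))"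
    by (auto simp: CfunOn_blat_def CfunOn_eq_0_iff_supn[OF E]
        intro: supn_nonneg[OF E CfunOn_cont])
  show "\<forall>a. \<forall>x\<in>carr (CfunOn_blat E). nrm (CfunOn_blat E) (scal (CfunOn_blat E) a x) =
          \<bar>a\<bar> * nrm (CfunOn_blat E) x"
    by (auto simp: CfunOn_blat_def supn_scale[OF E CfunOn_cont])
  show "\<forall>x\<in>carr (CfunOn_blat E). \<forall>y\<in>carr (CfunOn_blat E).
          nrm (CfunOn_blat E) (add (CfunOn_blat E) x y) \<le>
          nrm (CfunOn_blat E) x + nrm (CfunOn_blat E) y"
    by (auto simp: CfunOn_blat_def supn_triangle[OF E CfunOn_cont CfunOn_cont])
qed (use CfunOn_blat_complete[OF E] CfunOn_blat_lattice_norm[OF E] in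
    \<open>auto simp: CfunOn_blat_def algebra_simps
      intro!: ext antisym mult_left_mono CfunOn_zero CfunOn_add CfunOn_scale CfunOn_max
      intro: order_trans\<close>)

subsection \<open>Pulling back a URED renorming along an isomorphic embedding\<close>

definition pointwise_linear_on :: "('a \<Rightarrow> real) set \<Rightarrow> (('a \<Rightarrow> real) \<Rightarrow> 'b \<Rightarrow> real) \<Rightarrow> bool" where
  "pointwise_linear_on V S \<longleftrightarrow>
     (\<forall>g\<in>V. \<forall>h\<in>V. \<forall>a b. S (\<lambda>t. a * g t + b * h t) = (\<lambda>t. a * S g t + b * S h t))"

lemma pointwise_linear_on_combination:
  assumes "pointwise_linear_on V S" "g \<in> V" "h \<in> V"
  shows "S (\<lambda>t. a * g t + b * h t) = (\<lambda>t. a * S g t + b * S h t)"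
  using assms unfolding pointwise_linear_on_def by blast

lemma pointwise_linear_on_scale:
  assumes "pointwise_linear_on V S" "g \<in> V"
  shows "S (\<lambda>t. a * g t) = (\<lambda>t. a * S g t)"
  using pointwise_linear_on_combination[OF assms assms(2), of a 0] by simp

lemma pointwise_linear_on_add:
  assumes "pointwise_linear_on V S" "g \<in> V" "h \<in> V"
  shows "S (\<lambda>t. g t + h t) = (\<lambda>t. S g t + S h t)"
  using pointwise_linear_on_combination[OF assms, of 1 1] by simp

lemma pointwise_linear_on_diff:
  assumes "pointwise_linear_on V S" "g \<in> V" "h \<in> V"
  shows "S (\<lambda>t. g t - h t) = (\<lambda>t. S g t - S h t)"
  using pointwise_linear_on_combination[OF assms, of 1 "-1"] by simp

lemma pointwise_linear_on_midpoint:
  assumes "pointwise_linear_on V S" "g \<in> V" "h \<in> V"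
  shows "S (\<lambda>t. (g t + h t) / 2) = (\<lambda>t. (S g t + S h t) / 2)"
  using pointwise_linear_on_combination[OF assms, of "1/2" "1/2"] by (simp add: add_divide_distrib)

lemma is_norm_on_pullback:
  assumes N: "is_norm_on W N" and "S ` V \<subseteq> W" and S: "pointwise_linear_on V S"
    and inj: "\<forall>g\<in>V. S g = (\<lambda>t. 0) \<longrightarrow> g = (\<lambda>t. 0)"
  shows "is_norm_on V (\<lambda>g. N (S g))"
  unfolding is_norm_on_def
proof (intro conjI ballI allI)
  fix g assume g: "g \<in> V"
  then have Sg: "S g \<in> W" using \<open>S ` V \<subseteq> W\<close> by blast
  have "S (\<lambda>t. 0) = (\<lambda>t. 0)" if "g = (\<lambda>t. 0)"
    using pointwise_linear_on_scale[OF S g, of 0] that by simp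
  then show "0 \<le> N (S g)" "(N (S g) = 0) = (g = (\<lambda>t. 0))"
    using N Sg inj g unfolding is_norm_on_def by auto
  show "N (S (\<lambda>t. a * g t)) = \<bar>a\<bar> * N (S g)" for a
    using N Sg unfolding is_norm_on_def pointwise_linear_on_scale[OF S g] by blast
  fix h assume "h \<in> V"
  then show "N (S (\<lambda>t. g t + h t)) \<le> N (S g) + N (S h)"
    using N Sg \<open>S ` V \<subseteq> W\<close> unfolding is_norm_on_def pointwise_linear_on_add[OF S g \<open>h \<in> V\<close>]
    by blast
qed

lemma equiv_norms_on_pullback:
  assumes "equiv_norms_on W N M" "S ` V \<subseteq> W" "0 < a" "0 < b"
    and bounds: "\<forall>g\<in>V. a * M' g \<le> M (S g) \<and> M (S g) \<le> b * M' g"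
  shows "equiv_norms_on V (\<lambda>g. N (S g)) M'"
proof -
  obtain c C where "0 < c" "0 < C" and cC: "\<forall>x\<in>W. c * M x \<le> N x \<and> N x \<le> C * M x"
    using assms(1) unfolding equiv_norms_on_def by blast
  have "c * a * M' g \<le> N (S g) \<and> N (S g) \<le> C * b * M' g" if "g \<in> V" for g
  proof -
    have "c * (a * M' g) \<le> c * M (S g)" "C * M (S g) \<le> C * (b * M' g)"
      using bounds that \<open>0 < c\<close> \<open>0 < C\<close> by simp_all
    moreover have "c * M (S g) \<le> N (S g) \<and> N (S g) \<le> C * M (S g)"
      using cC that \<open>S ` V \<subseteq> W\<close> by blast
    ultimately show ?thesis by (simp add: mult.assoc)
  qed
  then show ?thesis
    unfolding equiv_norms_on_def using \<open>0 < a\<close> \<open>0 < b\<close> \<open>0 < c\<close> \<open>0 < C\<close>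
    by (intro exI[of _ "c * a"] exI[of _ "C * b"]) auto
qed

lemma URED_on_pullback:
  assumes N: "URED_on W N" and "S ` V \<subseteq> W" and S: "pointwise_linear_on V S"
  shows "URED_on V (\<lambda>g. N (S g))"
  unfolding URED_on_def
proof (intro allI impI, elim conjE)
  fix xs ys z and r :: "nat \<Rightarrow> real"
  assume xy: "\<forall>n. xs n \<in> V \<and> ys n \<in> V \<and> N (S (xs n)) = 1 \<and> N (S (ys n)) = 1"
    and z: "z \<in> V" and dir: "\<forall>n. (\<lambda>t. xs n t - ys n t) = (\<lambda>t. r n * z t)"
    and mid: "(\<lambda>n. N (S (\<lambda>t. (xs n t + ys n t) / 2))) \<longlonglongrightarrow> 1"
  have x: "xs n \<in> V" and y: "ys n \<in> V" for n using xy by auto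
  note diff = pointwise_linear_on_diff[OF S x y]
  have "(\<lambda>t. S (xs n) t - S (ys n) t) = (\<lambda>t. r n * S z t)" for n
    using dir pointwise_linear_on_scale[OF S z] by (metis diff)
  moreover have "(\<lambda>n. N (\<lambda>t. (S (xs n) t + S (ys n) t) / 2)) \<longlonglongrightarrow> 1"
    using mid unfolding pointwise_linear_on_midpoint[OF S x y] .
  moreover have "\<forall>n. S (xs n) \<in> W \<and> S (ys n) \<in> W \<and> N (S (xs n)) = 1 \<and> N (S (ys n)) = 1"
    "S z \<in> W"
    using xy z \<open>S ` V \<subseteq> W\<close> by auto
  ultimately have "(\<lambda>n. N (\<lambda>t. S (xs n) t - S (ys n) t)) \<longlonglongrightarrow> 0"
    using N[unfolded URED_on_def, rule_format, of "\<lambda>n. S (xs n)" "\<lambda>n. S (ys n)" "S z" r]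
    by blast
  then show "(\<lambda>n. N (S (\<lambda>t. xs n t - ys n t))) \<longlonglongrightarrow> 0"
    unfolding diff .
qed

lemma admits_equiv_URED_pullback:
  assumes "admits_equiv_URED W M" "S ` V \<subseteq> W" "pointwise_linear_on V S"
    and "\<forall>g\<in>V. S g = (\<lambda>t. 0) \<longrightarrow> g = (\<lambda>t. 0)"
    and "0 < a" "0 < b" "\<forall>g\<in>V. a * M' g \<le> M (S g) \<and> M (S g) \<le> b * M' g"
  shows "admits_equiv_URED V M'"
proof -
  obtain N where N: "is_norm_on W N" "equiv_norms_on W N M" "URED_on W N"
    using assms(1) unfolding admits_equiv_URED_def by blast
  have "is_norm_on V (\<lambda>g. N (S g))"
    by (rule is_norm_on_pullback[OF N(1) assms(2-4)])
  moreover have "equiv_norms_on V (\<lambda>g. N (S g)) M'"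
    by (rule equiv_norms_on_pullback[of W N M S V a b M', OF N(2) assms(2,5-7)])
  moreover have "URED_on V (\<lambda>g. N (S g))"
    by (rule URED_on_pullback[OF N(3) assms(2,3)])
  ultimately show ?thesis unfolding admits_equiv_URED_def by blast
qed

subsection \<open>The extension operator\<close>

lemma bounded_extension_operator:
  fixes E :: "'a::topological_space set"
  assumes E: "compact E"
    and lift: "\<forall>(L :: ('a \<Rightarrow> real) set blat) T.
           banach_lattice L \<and> lin_lattice_hom L (CfunOn E) T \<and> bounded_op L E T \<longrightarrow>
           (\<exists>T'. lin_lattice_hom L Cfun T' \<and> bounded_op L UNIV T' \<and>
                 (\<forall>x\<in>carr L. \<forall>t\<in>E. T' x t = T x t) \<and>
                 opnorm L UNIV T' = opnorm L E T)"
  obtains S K where "S ` CfunOn E \<subseteq> Cfun" "pointwise_linear_on (CfunOn E) S"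
    "\<And>g t. g \<in> CfunOn E \<Longrightarrow> t \<in> E \<Longrightarrow> S g t = g t"
    "0 < K" "\<And>g. g \<in> CfunOn E \<Longrightarrow> supn UNIV (S g) \<le> K * supn E g"
proof -
  let ?L = "CfunOn_blat E"
  have "lin_lattice_hom ?L (CfunOn E) the_elem"
    unfolding lin_lattice_hom_def
    by (auto simp: CfunOn_blat_def intro: CfunOn_add CfunOn_scale CfunOn_max)
  moreover have "bounded_op ?L E the_elem"
    unfolding bounded_op_def by (rule exI[of _ 1]) (auto simp: CfunOn_blat_def)
  ultimately obtain T where T: "lin_lattice_hom ?L Cfun T" "bounded_op ?L UNIV T"
    and restrict: "\<forall>x\<in>carr ?L. \<forall>t\<in>E. T x t = the_elem x t"
    using lift banach_lattice_CfunOn_blat[OF E] by blast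
  obtain K where K: "\<forall>x\<in>carr ?L. supn UNIV (T x) \<le> K * nrm ?L x"
    using T(2) unfolding bounded_op_def by blast
  have carr: "g \<in> CfunOn E \<Longrightarrow> {g} \<in> carr ?L" for g by (simp add: CfunOn_blat_def)
  have "(\<lambda>g. T {g}) ` CfunOn E \<subseteq> Cfun"
    using T(1) carr unfolding lin_lattice_hom_def by blast
  moreover have "pointwise_linear_on (CfunOn E) (\<lambda>g. T {g})"
    unfolding pointwise_linear_on_def
  proof (intro ballI allI)
    fix g h a b assume g: "g \<in> CfunOn E" and h: "h \<in> CfunOn E"
    have "{\<lambda>t. a * g t + b * h t} = add ?L (scal ?L a {g}) (scal ?L b {h})"
      "scal ?L a {g} \<in> carr ?L" "scal ?L b {h} \<in> carr ?L"
      using carr[OF CfunOn_scale[OF g]] carr[OF CfunOn_scale[OF h]]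
      by (auto simp: CfunOn_blat_def)
    then show "T {\<lambda>t. a * g t + b * h t} = (\<lambda>t. a * T {g} t + b * T {h} t)"
      using T(1) carr[OF g] carr[OF h] unfolding lin_lattice_hom_def by simp
  qed
  moreover have "T {g} t = g t" if "g \<in> CfunOn E" "t \<in> E" for g t
    using restrict carr[OF that(1)] that(2) by simp
  moreover have "0 < max K 1" by simp
  moreover have "supn UNIV (T {g}) \<le> max K 1 * supn E g" if "g \<in> CfunOn E" for g
  proof -
    have "supn UNIV (T {g}) \<le> K * supn E g"
      using K that by (simp add: CfunOn_blat_def)
    also have "\<dots> \<le> max K 1 * supn E g"
      using supn_nonneg[OF E CfunOn_cont[OF that]] by (intro mult_right_mono) auto
    finally show ?thesis .
  qed
  ultimately show ?thesis by (rule that[of "\<lambda>g. T {g}" "max K 1"])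
qed

theorem theorem11:
  fixes E :: "'a::t2_space set"
  assumes "compact (UNIV :: 'a set)"
    and "admits_equiv_URED (Cfun :: ('a \<Rightarrow> real) set) (supn UNIV)"
    and "closed E"
    and "\<forall>(L :: ('a \<Rightarrow> real) set blat) T.
           banach_lattice L \<and> lin_lattice_hom L (CfunOn E) T \<and> bounded_op L E T \<longrightarrow>
           (\<exists>T'. lin_lattice_hom L Cfun T' \<and> bounded_op L UNIV T' \<and>
                 (\<forall>x\<in>carr L. \<forall>t\<in>E. T' x t = T x t) \<and>
                 opnorm L UNIV T' = opnorm L E T)"
  shows "admits_equiv_URED (CfunOn E) (supn E)"
proof -
  have E: "compact E" using closed_Int_compact[OF assms(3,1)] by simp
  obtain S K where S: "S ` CfunOn E \<subseteq> Cfun" "pointwise_linear_on (CfunOn E) S"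
    and restrict: "\<And>g t. g \<in> CfunOn E \<Longrightarrow> t \<in> E \<Longrightarrow> S g t = g t"
    and "0 < K" and K: "\<And>g. g \<in> CfunOn E \<Longrightarrow> supn UNIV (S g) \<le> K * supn E g"
    using bounded_extension_operator[OF E assms(4)] by blast
  have "\<forall>g\<in>CfunOn E. 1 * supn E g \<le> supn UNIV (S g) \<and> supn UNIV (S g) \<le> K * supn E g"
  proof
    fix g assume g: "g \<in> CfunOn E"
    have "continuous_on UNIV (S g)" using S(1) g by (auto simp: Cfun_def)
    then have "supn E g \<le> supn UNIV (S g)"
      by (rule supn_le_supn_extension[OF assms(1) subset_UNIV]) (use restrict[OF g] in auto)
    with K[OF g] show "1 * supn E g \<le> supn UNIV (S g) \<and> supn UNIV (S g) \<le> K * supn E g"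
      by simp
  qed
  moreover have "\<forall>g\<in>CfunOn E. S g = (\<lambda>t. 0) \<longrightarrow> g = (\<lambda>t. 0)"
  proof (intro ballI impI ext)
    fix g t assume g: "g \<in> CfunOn E" and "S g = (\<lambda>t. 0)"
    then show "g t = 0"
      using restrict[OF g, of t] CfunOn_outside[OF g, of t] by (cases "t \<in> E") auto
  qed
  ultimately show ?thesis
    using admits_equiv_URED_pullback[OF assms(2) S _ zero_less_one \<open>0 < K\<close>] by blast
qed

end
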